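(* Let $(X,T)$ be a topological dynamical system. If $(X,T)$ is multi-sensitive then it is thickly sensitive. If moreover $(X,T)$ is topologically transitive, then $(X,T)$ is thickly sensitive if and only if it is multi-sensitive.
   Context: A topological dynamical system $(X,T)$: $(X,\varrho)$ compact metric, $T:X\to X$ continuous surjection. For opene (open nonempty) $U\subset X$ and $\delta>0$, $S_T(U,\delta)=\{n\in\mathbb{N}:\exists x_1,x_2\in U,\ \varrho(T^nx_1,T^nx_2)>\delta\}$. A set $\mathcal S\subset\mathbb N$ is thick if for each $k$ there is $n_k$ with $\{n_k,\dots,n_k+k\}\subset\mathcal S$. $(X,T)$ is thickly sensitive if there is $\delta>0$ with $S_T(U,\delta)$ thick for every opene $U$; multi-sensitive if there is $\delta>0$ such that $\bigcap_{i=1}^k S_T(U_i,\delta)\neq\varnothing$ for every finite collection $U_1,\dots,U_k$ of opene subsets. $(X,T)$ is transitive if for all opene $U_1,U_2$ there is $n\in\mathbb N$ with $U_1\cap T^{-n}U_2\ne\varnothing$. *)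

theory Defs
  imports "HOL-Analysis.Analysis"
begin

text \<open>A topological dynamical system: X compact metric (as a subset of a metric space),
  T continuous surjection X onto X. Natural numbers are the positive integers.\<close>

definition tds :: "'a::metric_space set \<Rightarrow> ('a \<Rightarrow> 'a) \<Rightarrow> bool" where
  "tds X T \<longleftrightarrow> X \<noteq> {} \<and> compact X \<and> continuous_on X T \<and> T ` X = X"

definition opene :: "'a::metric_space set \<Rightarrow> 'a set \<Rightarrow> bool" where
  "opene X U \<longleftrightarrow> openin (top_of_set X) U \<and> U \<noteq> {}"

definition sens_set :: "'a::metric_space set \<Rightarrow> ('a \<Rightarrow> 'a) \<Rightarrow> 'a set \<Rightarrow> real \<Rightarrow> nat set" where
  "sens_set X T U \<delta> = {n. n \<ge> 1 \<and> (\<exists>x1\<in>U. \<exists>x2\<in>U. dist ((T ^^ n) x1) ((T ^^ n) x2) > \<delta>)}"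

definition thick :: "nat set \<Rightarrow> bool" where
  "thick S \<longleftrightarrow> (\<forall>k. \<exists>n. {n..n+k} \<subseteq> S)"

definition thickly_sensitive :: "'a::metric_space set \<Rightarrow> ('a \<Rightarrow> 'a) \<Rightarrow> bool" where
  "thickly_sensitive X T \<longleftrightarrow>
     (\<exists>\<delta>>0. \<forall>U. opene X U \<longrightarrow> thick (sens_set X T U \<delta>))"

definition multi_sensitive :: "'a::metric_space set \<Rightarrow> ('a \<Rightarrow> 'a) \<Rightarrow> bool" where
  "multi_sensitive X T \<longleftrightarrow>
     (\<exists>\<delta>>0. \<forall>k::nat. \<forall>U::nat \<Rightarrow> 'a set. (\<forall>i\<in>{1..k}. opene X (U i)) \<longrightarrow>
        (\<Inter>i\<in>{1..k}. sens_set X T (U i) \<delta>) \<noteq> {})"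

definition transitive :: "'a::metric_space set \<Rightarrow> ('a \<Rightarrow> 'a) \<Rightarrow> bool" where
  "transitive X T \<longleftrightarrow>
     (\<forall>U1 U2. opene X U1 \<and> opene X U2 \<longrightarrow>
        (\<exists>n\<ge>1. U1 \<inter> {x\<in>X. (T ^^ n) x \<in> U2} \<noteq> {}))"

end

theory Submission
  imports Defs
begin

text \<open>Thick sensitivity from multi-sensitivity: shrink an opene set U to V so that the
  first k iterates of V stay within \<delta>/2 of each other. Multi-sensitivity applied to the
  preimages of V under T^j, j = 0..k, gives a single time n, necessarily n > k, and then n - j
  is a sensitivity time of U for every j \<le> k.

  Conversely, under transitivity finitely many opene sets U_i share an opene set V whose
  image under some T^(j_i), j_i \<le> N, lies in U_i. A run m, ..., m + N of sensitivity times
  of V then makes m a common sensitivity time of all the U_i.\<close>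

lemma funpow_image_eq:
  assumes "T ` X = X" shows "(T ^^ n) ` X = X"
proof (induction n)
  case (Suc n)
  then show ?case using assms by (metis funpow_Suc_right image_comp)
qed simp

lemma continuous_on_funpow:
  assumes "continuous_on X T" "T ` X \<subseteq> X"
  shows "continuous_on X (T ^^ n)"
proof (induction n)
  case (Suc n)
  have "(T ^^ n) ` X \<subseteq> X"
    using assms(2) by (induction n) (auto simp: image_subset_iff)
  then have "continuous_on X (T \<circ> (T ^^ n))"
    using Suc assms(1) continuous_on_compose continuous_on_subset by blast
  then show ?case by simp
qed simp

lemma opene_funpow_preimage:
  assumes "tds X T" "opene X U"
  shows "opene X {x\<in>X. (T ^^ j) x \<in> U}"
proof -
  have onto: "(T ^^ j) ` X = X"
    using assms(1) by (simp add: tds_def funpow_image_eq)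
  have cont: "continuous_on X (T ^^ j)"
    using assms(1) by (simp add: tds_def continuous_on_funpow)
  have "T ^^ j \<in> X \<rightarrow> X"
    using onto by (simp add: image_subset_iff_funcset[symmetric])
  then have "openin (top_of_set X) (X \<inter> (T ^^ j) -` U)"
    using continuous_openin_preimage[OF cont] assms(2) by (simp add: opene_def)
  moreover have "U \<subseteq> (T ^^ j) ` X"
    using assms(2) onto openin_imp_subset unfolding opene_def by blast
  then have "{x\<in>X. (T ^^ j) x \<in> U} \<noteq> {}"
    using assms(2) unfolding opene_def by blast
  ultimately show ?thesis
    unfolding opene_def by (simp add: Int_def vimage_def)
qed

lemma sens_set_funpow_preimage:
  assumes "m + j \<in> sens_set X T {x\<in>X. (T ^^ j) x \<in> U} \<delta>" "m \<ge> 1"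
  shows "m \<in> sens_set X T U \<delta>"
proof -
  obtain x1 x2 where "(T ^^ j) x1 \<in> U" "(T ^^ j) x2 \<in> U"
    and "dist ((T ^^ (m + j)) x1) ((T ^^ (m + j)) x2) > \<delta>"
    using assms(1) unfolding sens_set_def by auto
  then show ?thesis
    using assms(2) unfolding sens_set_def by (auto simp: funpow_add)
qed

lemma funpow_dist_small_near:
  fixes T :: "'a::metric_space \<Rightarrow> 'a"
  assumes "\<And>m. continuous_on X (T ^^ m)" "x0 \<in> X" "\<epsilon> > 0"
  shows "\<exists>e>0. \<forall>x\<in>X. dist x x0 < e \<longrightarrow> (\<forall>m\<le>k. dist ((T ^^ m) x) ((T ^^ m) x0) < \<epsilon>)"
proof (induction k)
  case 0
  show ?case using assms(3) by (intro exI[of _ \<epsilon>]) auto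
next
  case (Suc k)
  then obtain e where "e > 0"
    and e: "\<forall>x\<in>X. dist x x0 < e \<longrightarrow> (\<forall>m\<le>k. dist ((T ^^ m) x) ((T ^^ m) x0) < \<epsilon>)"
    by blast
  obtain d where "d > 0"
    and d: "\<forall>x\<in>X. dist x x0 < d \<longrightarrow> dist ((T ^^ Suc k) x) ((T ^^ Suc k) x0) < \<epsilon>"
    using assms(1)[of "Suc k", unfolded continuous_on_iff] assms(2,3) by blast
  show ?case
    using \<open>e > 0\<close> \<open>d > 0\<close> e d by (intro exI[of _ "min e d"]) (auto simp: le_Suc_eq)
qed

lemma opene_subset_sens_set_gt:
  assumes "tds X T" "opene X U" "\<delta> > 0"
  obtains V where "opene X V" "V \<subseteq> U" "\<And>n. n \<in> sens_set X T V \<delta> \<Longrightarrow> n > k"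
proof -
  obtain x0 where "x0 \<in> U" using assms(2) unfolding opene_def by auto
  then obtain e where "e > 0" and e: "\<forall>x\<in>X. dist x x0 < e \<longrightarrow> x \<in> U"
    using assms(2) unfolding opene_def openin_euclidean_subtopology_iff by blast
  have "x0 \<in> X" using \<open>x0 \<in> U\<close> assms(2) openin_imp_subset unfolding opene_def by blast
  moreover have "continuous_on X (T ^^ m)" for m
    using assms(1) by (simp add: tds_def continuous_on_funpow)
  ultimately obtain e' where "e' > 0" and e': "\<forall>x\<in>X. dist x x0 < e' \<longrightarrow>
      (\<forall>m\<le>k. dist ((T ^^ m) x) ((T ^^ m) x0) < \<delta> / 2)"
    using funpow_dist_small_near[of X T x0 "\<delta> / 2" k] assms(3) by auto
  define V where "V = X \<inter> ball x0 (min e e')"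
  have "opene X V"
    unfolding opene_def V_def using \<open>x0 \<in> X\<close> \<open>e > 0\<close> \<open>e' > 0\<close> by auto
  moreover have "V \<subseteq> U" using e unfolding V_def by (auto simp: dist_commute)
  moreover have "n > k" if n: "n \<in> sens_set X T V \<delta>" for n
  proof (rule ccontr)
    assume "\<not> n > k"
    obtain x1 x2 where "x1 \<in> V" "x2 \<in> V" "dist ((T ^^ n) x1) ((T ^^ n) x2) > \<delta>"
      using n unfolding sens_set_def by auto
    moreover have "dist ((T ^^ n) x1) ((T ^^ n) x0) < \<delta> / 2"
      "dist ((T ^^ n) x2) ((T ^^ n) x0) < \<delta> / 2"
      using e' \<open>x1 \<in> V\<close> \<open>x2 \<in> V\<close> \<open>\<not> n > k\<close> unfolding V_def by (auto simp: dist_commute)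
    ultimately show False
      using dist_triangle2[of "(T ^^ n) x1" "(T ^^ n) x2" "(T ^^ n) x0"] by linarith
  qed
  ultimately show ?thesis using that by blast
qed

lemma multi_sensitive_imp_thickly_sensitive:
  assumes "tds X T" "multi_sensitive X T"
  shows "thickly_sensitive X T"
proof -
  obtain \<delta> where "\<delta> > 0" and multi: "\<forall>k::nat. \<forall>U::nat \<Rightarrow> 'a set. (\<forall>i\<in>{1..k}. opene X (U i)) \<longrightarrow>
      (\<Inter>i\<in>{1..k}. sens_set X T (U i) \<delta>) \<noteq> {}"
    using assms(2) unfolding multi_sensitive_def by blast
  have "\<exists>n. {n..n + k} \<subseteq> sens_set X T U \<delta>" if "opene X U" for U k
  proof -
    obtain V where "opene X V" "V \<subseteq> U" and late: "\<And>n. n \<in> sens_set X T V \<delta> \<Longrightarrow> n > k"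
      using opene_subset_sens_set_gt[OF assms(1) \<open>opene X U\<close> \<open>\<delta> > 0\<close>] by blast
    define W where "W i = {x\<in>X. (T ^^ (i - 1)) x \<in> V}" for i
    have "\<forall>i\<in>{1..k + 1}. opene X (W i)"
      by (simp add: W_def opene_funpow_preimage[OF assms(1) \<open>opene X V\<close>])
    then have "(\<Inter>i\<in>{1..k + 1}. sens_set X T (W i) \<delta>) \<noteq> {}"
      using multi by blast
    then obtain n where n: "\<And>i. i \<in> {1..k + 1} \<Longrightarrow> n \<in> sens_set X T (W i) \<delta>"
      by blast
    have "W 1 = V" using \<open>opene X V\<close> openin_imp_subset unfolding W_def opene_def by auto
    then have "n > k" using late n[of 1] by simp
    have shifted: "n - j \<in> sens_set X T U \<delta>" if "j \<le> k" for j
    proof -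
      have "n - j + j \<in> sens_set X T {x\<in>X. (T ^^ j) x \<in> V} \<delta>"
        using n[of "j + 1"] that \<open>n > k\<close> unfolding W_def by simp
      then have "n - j \<in> sens_set X T V \<delta>"
        by (rule sens_set_funpow_preimage) (use that \<open>n > k\<close> in simp)
      then show ?thesis using \<open>V \<subseteq> U\<close> unfolding sens_set_def by blast
    qed
    have "{n - k..n} \<subseteq> sens_set X T U \<delta>"
    proof
      fix m assume "m \<in> {n - k..n}"
      then have "n - m \<le> k" "n - (n - m) = m" by auto
      then show "m \<in> sens_set X T U \<delta>" using shifted by metis
    qed
    then show ?thesis using \<open>n > k\<close> by (intro exI[of _ "n - k"]) simp
  qed
  then show ?thesis unfolding thickly_sensitive_def thick_def using \<open>\<delta> > 0\<close> by blast
qed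

lemma transitive_common_opene_funpow:
  fixes k :: nat
  assumes "tds X T" "transitive X T" "\<forall>i\<in>{1..k}. opene X (U i)"
  shows "\<exists>V N. opene X V \<and> (\<forall>i\<in>{1..k}. \<exists>j\<le>N. V \<subseteq> {x\<in>X. (T ^^ j) x \<in> U i})"
  using assms(3)
proof (induction k)
  case 0
  have "opene X X" using assms(1) unfolding opene_def tds_def by auto
  then show ?case by auto
next
  case (Suc k)
  then obtain V N where "opene X V"
    and V: "\<forall>i\<in>{1..k}. \<exists>j\<le>N. V \<subseteq> {x\<in>X. (T ^^ j) x \<in> U i}"
    by auto
  have "opene X (U (Suc k))" using Suc.prems by auto
  define P where "P n = {x\<in>X. (T ^^ n) x \<in> U (Suc k)}" for n
  obtain n where "V \<inter> P n \<noteq> {}"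
    using assms(2) \<open>opene X V\<close> \<open>opene X (U (Suc k))\<close> unfolding transitive_def P_def by blast
  moreover have "opene X (P n)"
    unfolding P_def using opene_funpow_preimage[OF assms(1) \<open>opene X (U (Suc k))\<close>] .
  ultimately have "opene X (V \<inter> P n)"
    using \<open>opene X V\<close> unfolding opene_def by blast
  moreover have "\<exists>j\<le>max N n. V \<inter> P n \<subseteq> {x\<in>X. (T ^^ j) x \<in> U i}" if i: "i \<in> {1..Suc k}" for i
  proof (cases "i = Suc k")
    case True
    then show ?thesis unfolding P_def by (intro exI[of _ n]) auto
  next
    case False
    then have "i \<in> {1..k}" using i by auto
    then obtain j where "j \<le> N" "V \<subseteq> {x\<in>X. (T ^^ j) x \<in> U i}"
      using V by blast
    then show ?thesis by (intro exI[of _ j]) auto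
  qed
  ultimately show ?case by blast
qed

lemma thickly_sensitive_imp_multi_sensitive:
  assumes "tds X T" "transitive X T" "thickly_sensitive X T"
  shows "multi_sensitive X T"
proof -
  obtain \<delta> where "\<delta> > 0" and thick: "\<And>U. opene X U \<Longrightarrow> thick (sens_set X T U \<delta>)"
    using assms(3) unfolding thickly_sensitive_def by blast
  have "(\<Inter>i\<in>{1..k}. sens_set X T (U i) \<delta>) \<noteq> {}"
    if U: "\<forall>i\<in>{1..k}. opene X (U i)" for k and U :: "nat \<Rightarrow> 'a set"
  proof -
    obtain V N where "opene X V" and V: "\<forall>i\<in>{1..k}. \<exists>j\<le>N. V \<subseteq> {x\<in>X. (T ^^ j) x \<in> U i}"
      using transitive_common_opene_funpow[OF assms(1,2) U] by blast
    obtain m where m: "{m..m + N} \<subseteq> sens_set X T V \<delta>"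
      using thick[OF \<open>opene X V\<close>] unfolding thick_def by blast
    then have "m \<in> sens_set X T V \<delta>" by auto
    then have "m \<ge> 1" unfolding sens_set_def by auto
    have "m \<in> sens_set X T (U i) \<delta>" if i: "i \<in> {1..k}" for i
    proof -
      obtain j where "j \<le> N" and j: "V \<subseteq> {x\<in>X. (T ^^ j) x \<in> U i}" using V i by blast
      then have "m + j \<in> sens_set X T V \<delta>" using m by auto
      then have "m + j \<in> sens_set X T {x\<in>X. (T ^^ j) x \<in> U i} \<delta>"
        using j unfolding sens_set_def by blast
      then show ?thesis using \<open>m \<ge> 1\<close> by (rule sens_set_funpow_preimage)
    qed
    then show ?thesis by blast
  qed
  then show ?thesis unfolding multi_sensitive_def using \<open>\<delta> > 0\<close> by blast
qed

theorem proposition3p2: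
  fixes X :: "'a::metric_space set" and T :: "'a \<Rightarrow> 'a"
  assumes "tds X T"
  shows "(multi_sensitive X T \<longrightarrow> thickly_sensitive X T)
    \<and> (transitive X T \<longrightarrow> (thickly_sensitive X T \<longleftrightarrow> multi_sensitive X T))"
  using multi_sensitive_imp_thickly_sensitive[OF assms]
    thickly_sensitive_imp_multi_sensitive[OF assms] by blast

end
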